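(* Let $M$ be a finite set of alternatives, $\mathcal{R}$ the set of weak preference orders on $M$, and $\varphi:\mathcal{R}\to\Delta(M)$ a mechanism. If $\varphi$ is strategyproof, then it is separation responsive.
   Context: A preference order is a complete, transitive relation $R$ on $M$; $a\,I\,b$ means $a\,R\,b$ and $b\,R\,a$; $a\,P\,b$ means $a\,R\,b$ and not $b\,R\,a$. Write $R$ as $M_1\,P\,\cdots\,P\,M_K$ where $(M_k)$ are the nonempty indifference classes ordered so that $a\,P\,b$ for $a\in M_k$, $b\in M_{k'}$, $k<k'$. For $A\subseteq M$, $\varphi_A(R)=\sum_{a\in A}(\varphi(R))_a$. A lottery $x$ first order-stochastically dominates $y$ at $R$ if $\sum_{j: j R a}x_j\ge\sum_{j: j R a}y_j$ for all $a\in M$. $\varphi$ is strategyproof if $\varphi(R)$ first order-stochastically dominates $\varphi(R')$ at $R$ for all $R,R'\in\mathcal{R}$. A separation is a pair $(R,R')$ such that, with $R=M_1\,P\,\cdots\,P\,M_K$, there are $\kappa\in\{1,\dots,K\}$ and a partition of $M_\kappa$ into disjoint nonempty $M_\kappa^1,M_\kappa^2$ with $R'=M_1\,P'\,\cdots\,P'\,M_{\kappa-1}\,P'\,M_\kappa^1\,P'\,M_\kappa^2\,P'\,M_{\kappa+1}\,P'\,\cdots\,P'\,M_K$ (indifference within each listed set). $\varphi$ is separation responsive if for every separation $(R,R')$, $\varphi_{M_\kappa^1}(R')\ge\varphi_{M_\kappa^1}(R)$ and $\varphi_{M_\kappa^2}(R')\le\varphi_{M_\kappa^2}(R)$. *)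

theory Defs
  imports Complex_Main
begin

text \<open>Weak preference orders on the finite set of alternatives M: complete, transitive
relations on M (as sets of pairs (a,b) meaning a R b).\<close>
definition pref_orders :: "'a set \<Rightarrow> 'a rel set" where
  "pref_orders M = {R. R \<subseteq> M \<times> M \<and> (\<forall>a\<in>M. \<forall>b\<in>M. (a,b) \<in> R \<or> (b,a) \<in> R) \<and> trans R}"

definition lottery :: "'a set \<Rightarrow> ('a \<Rightarrow> real) \<Rightarrow> bool" where
  "lottery M x \<longleftrightarrow> (\<forall>a\<in>M. x a \<ge> 0) \<and> (\<Sum>a\<in>M. x a) = 1"

definition prob_set :: "('a \<Rightarrow> real) \<Rightarrow> 'a set \<Rightarrow> real" where
  "prob_set x A = (\<Sum>a\<in>A. x a)"

definition sd_dominates :: "'a set \<Rightarrow> 'a rel \<Rightarrow> ('a \<Rightarrow> real) \<Rightarrow> ('a \<Rightarrow> real) \<Rightarrow> bool" where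
  "sd_dominates M R x y \<longleftrightarrow>
     (\<forall>a\<in>M. (\<Sum>j\<in>{j\<in>M. (j,a) \<in> R}. x j) \<ge> (\<Sum>j\<in>{j\<in>M. (j,a) \<in> R}. y j))"

definition strategyproof :: "'a set \<Rightarrow> ('a rel \<Rightarrow> 'a \<Rightarrow> real) \<Rightarrow> bool" where
  "strategyproof M \<phi> \<longleftrightarrow>
     (\<forall>R\<in>pref_orders M. \<forall>R'\<in>pref_orders M. sd_dominates M R (\<phi> R) (\<phi> R'))"

definition ind_class :: "'a set \<Rightarrow> 'a rel \<Rightarrow> 'a \<Rightarrow> 'a set" where
  "ind_class M R a = {b\<in>M. (a,b) \<in> R \<and> (b,a) \<in> R}"

text \<open>A separation (R,R') with separated class C = C1 \<union> C2: R' agrees with R except that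
every element of C1 is now strictly preferred to every element of C2; this is exactly
R' = M_1 P' ... P' M_kappa^1 P' M_kappa^2 P' ... P' M_K.\<close>
definition separation_with :: "'a set \<Rightarrow> 'a rel \<Rightarrow> 'a rel \<Rightarrow> 'a set \<Rightarrow> 'a set \<Rightarrow> bool" where
  "separation_with M R R' C1 C2 \<longleftrightarrow>
     R \<in> pref_orders M \<and>
     (\<exists>a\<in>M. ind_class M R a = C1 \<union> C2) \<and>
     C1 \<noteq> {} \<and> C2 \<noteq> {} \<and> C1 \<inter> C2 = {} \<and>
     R' = R - C2 \<times> C1"

definition separation_responsive :: "'a set \<Rightarrow> ('a rel \<Rightarrow> 'a \<Rightarrow> real) \<Rightarrow> bool" where
  "separation_responsive M \<phi> \<longleftrightarrow>
     (\<forall>R R' C1 C2. separation_with M R R' C1 C2 \<longrightarrow>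
        prob_set (\<phi> R') C1 \<ge> prob_set (\<phi> R) C1 \<and>
        prob_set (\<phi> R') C2 \<le> prob_set (\<phi> R) C2)"

end

theory Submission
  imports Defs
begin

text \<open>Strategyproofness in both directions forces \<open>\<phi> R\<close> and \<open>\<phi> R'\<close> to give the same
probability to every set that is an upper contour set of both R and R'. For a separation of
the indifference class \<open>C = C\<^sub>1 \<union> C\<^sub>2\<close> of a, two such sets are the alternatives
weakly above a, and those strictly above a (the latter being either empty or the upper contour
set of a worst alternative among them). Their difference shows that C gets the same total
probability under R and R'. Finally, the R'-upper contour set of an element of \<open>C\<^sub>1\<close> is the
R-upper contour set of a minus \<open>C\<^sub>2\<close>, so dominance at R' shifts probability from \<open>C\<^sub>2\<close>
to \<open>C\<^sub>1\<close>.\<close>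

definition upper_contour :: "'a set \<Rightarrow> 'a rel \<Rightarrow> 'a \<Rightarrow> 'a set" where
  "upper_contour M R a = {j \<in> M. (j, a) \<in> R}"

lemma finite_upper_contour: "finite M \<Longrightarrow> finite (upper_contour M R a)"
  unfolding upper_contour_def by simp

lemma pref_ordersD:
  assumes "R \<in> pref_orders M"
  shows "R \<subseteq> M \<times> M" and "\<And>a b. a \<in> M \<Longrightarrow> b \<in> M \<Longrightarrow> (a, b) \<in> R \<or> (b, a) \<in> R"
    and "trans R"
  using assms unfolding pref_orders_def by auto

lemma pref_orders_refl: "R \<in> pref_orders M \<Longrightarrow> a \<in> M \<Longrightarrow> (a, a) \<in> R"
  using pref_ordersD(2)[of R M a a] by simp

lemma pref_orders_ex_worst:
  assumes "R \<in> pref_orders M" and "finite S" and "S \<noteq> {}" and "S \<subseteq> M"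
  shows "\<exists>b\<in>S. \<forall>j\<in>S. (j, b) \<in> R"
  using assms(2-4)
proof (induction S rule: finite_ne_induct)
  case (singleton x)
  then show ?case using pref_orders_refl[OF assms(1)] by simp
next
  case (insert x F)
  then obtain b where b: "b \<in> F" "\<forall>j\<in>F. (j, b) \<in> R" by auto
  show ?case
  proof (cases "(x, b) \<in> R")
    case True
    then show ?thesis using b by auto
  next
    case False
    then have "(b, x) \<in> R" using pref_ordersD(2)[OF assms(1)] b(1) insert.prems by blast
    then have "\<forall>j\<in>insert x F. (j, x) \<in> R"
      using b(2) pref_ordersD(3)[OF assms(1)] pref_orders_refl[OF assms(1)] insert.prems
      by (auto dest: transD)
    then show ?thesis by blast
  qed
qed

lemma upper_contour_ind_class:
  assumes "R \<in> pref_orders M" and "b \<in> ind_class M R a"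
  shows "upper_contour M R b = upper_contour M R a"
  using assms pref_ordersD(3)[OF assms(1)]
  unfolding upper_contour_def ind_class_def by (auto dest: transD)

lemma strict_upper_contour_cases:
  assumes "R \<in> pref_orders M" and "finite M"
  obtains "upper_contour M R a - ind_class M R a = {}"
  | b where "b \<in> upper_contour M R a - ind_class M R a"
      and "upper_contour M R b = upper_contour M R a - ind_class M R a"
proof -
  let ?V = "upper_contour M R a - ind_class M R a"
  have V: "?V = {j \<in> M. (j, a) \<in> R \<and> (a, j) \<notin> R}"
    unfolding upper_contour_def ind_class_def by auto
  have "trans R" using pref_ordersD(3)[OF assms(1)] .
  show thesis
  proof (cases "?V = {}")
    case False
    then obtain b where b: "b \<in> ?V" and worst: "\<forall>j\<in>?V. (j, b) \<in> R"
      using pref_orders_ex_worst[OF assms(1), of ?V] assms(2) V by auto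
    have "upper_contour M R b = ?V"
    proof
      show "upper_contour M R b \<subseteq> ?V"
        using b \<open>trans R\<close> unfolding upper_contour_def ind_class_def by (auto dest: transD)
      show "?V \<subseteq> upper_contour M R b"
        using worst unfolding V upper_contour_def by auto
    qed
    then show thesis using that(2) b by blast
  qed (use that(1) in blast)
qed

lemma upper_contour_diff_times:
  "upper_contour M (R - C2 \<times> C1) b = (if b \<in> C1 then upper_contour M R b - C2 else upper_contour M R b)"
  unfolding upper_contour_def by auto

lemma separation_with_pref_orders:
  assumes "separation_with M R R' C1 C2"
  shows "R' \<in> pref_orders M"
proof -
  from assms have R: "R \<in> pref_orders M" and R': "R' = R - C2 \<times> C1"
    and disj: "C1 \<inter> C2 = {}" unfolding separation_with_def by auto
  from assms obtain a where a_class: "ind_class M R a = C1 \<union> C2"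
    unfolding separation_with_def by auto
  note sub = pref_ordersD(1)[OF R] and total = pref_ordersD(2)[OF R] and tr = pref_ordersD(3)[OF R]
  have in_class: "x \<in> C1 \<union> C2 \<longleftrightarrow> x \<in> M \<and> (a, x) \<in> R \<and> (x, a) \<in> R" for x
    using a_class unfolding ind_class_def by blast
  have "(x, y) \<in> R' \<or> (y, x) \<in> R'" if "x \<in> M" "y \<in> M" for x y
  proof (cases "x \<in> C1 \<union> C2 \<and> y \<in> C1 \<union> C2")
    case True
    then have "(x, y) \<in> R" "(y, x) \<in> R" using in_class tr by (meson transD)+
    then show ?thesis using R' disj by auto
  qed (use total that R' in auto)
  moreover have "trans R'"
  proof (rule transI)
    fix x y z assume xy: "(x, y) \<in> R'" and yz: "(y, z) \<in> R'"
    then have "(x, y) \<in> R" "(y, z) \<in> R" using R' by auto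
    then have xz: "(x, z) \<in> R" using tr by (meson transD)
    show "(x, z) \<in> R'"
    proof (rule ccontr)
      assume "(x, z) \<notin> R'"
      then have "x \<in> C2" "z \<in> C1" using xz R' by auto
      \<comment> \<open>y lies between two members of the class, hence in it, so R' lacks one of the two steps\<close>
      then have "y \<in> C1 \<union> C2"
        using in_class \<open>(x, y) \<in> R\<close> \<open>(y, z) \<in> R\<close> sub tr by (blast dest: transD)
      then show False using xy yz R' \<open>x \<in> C2\<close> \<open>z \<in> C1\<close> by auto
    qed
  qed
  ultimately show ?thesis using sub R' unfolding pref_orders_def by auto
qed

lemma strategyproof_upper_contour_le:
  assumes "strategyproof M \<phi>" and "R \<in> pref_orders M" and "R' \<in> pref_orders M" and "a \<in> M"
  shows "sum (\<phi> R') (upper_contour M R a) \<le> sum (\<phi> R) (upper_contour M R a)"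
  using assms unfolding strategyproof_def sd_dominates_def upper_contour_def by blast

lemma strategyproof_upper_contour_eq:
  assumes "strategyproof M \<phi>" and "R \<in> pref_orders M" and "R' \<in> pref_orders M"
    and "a \<in> M" and "b \<in> M" and "upper_contour M R' b = upper_contour M R a"
  shows "sum (\<phi> R') (upper_contour M R a) = sum (\<phi> R) (upper_contour M R a)"
  using strategyproof_upper_contour_le[OF assms(1-4)]
    strategyproof_upper_contour_le[OF assms(1,3,2,5)] assms(6) by simp

lemma separation_withE:
  assumes "separation_with M R R' C1 C2"
  obtains a where "a \<in> M" and "ind_class M R a = C1 \<union> C2"
    and "R \<in> pref_orders M" and "R' \<in> pref_orders M" and "R' = R - C2 \<times> C1"
    and "C1 \<inter> C2 = {}" and "C1 \<noteq> {}" and "C2 \<noteq> {}"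
  using assms separation_with_pref_orders[OF assms] unfolding separation_with_def by blast

lemma separation_upper_contour:
  assumes "separation_with M R R' C1 C2" and "ind_class M R a = C1 \<union> C2"
    and "c \<in> C1 \<union> C2"
  shows "upper_contour M R' c = (if c \<in> C1 then upper_contour M R a - C2 else upper_contour M R a)"
proof -
  obtain "R \<in> pref_orders M" and R': "R' = R - C2 \<times> C1"
    using assms(1) by (rule separation_withE)
  then have "upper_contour M R c = upper_contour M R a"
    using assms(2,3) by (intro upper_contour_ind_class) simp_all
  then show ?thesis
    unfolding R' upper_contour_diff_times by simp
qed

lemma strategyproof_separation_upper_contour_eq:
  assumes "strategyproof M \<phi>" and "separation_with M R R' C1 C2"
    and "a \<in> M" and "ind_class M R a = C1 \<union> C2"
  shows "sum (\<phi> R') (upper_contour M R a) = sum (\<phi> R) (upper_contour M R a)"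
proof -
  obtain c where "c \<in> C2" and "c \<notin> C1" and "R \<in> pref_orders M" and "R' \<in> pref_orders M"
    using assms(2) by (elim separation_withE) auto
  moreover have "c \<in> M"
    using \<open>c \<in> C2\<close> assms(4) unfolding ind_class_def by auto
  ultimately show ?thesis
    using separation_upper_contour[OF assms(2,4), of c]
    by (intro strategyproof_upper_contour_eq[OF assms(1) _ _ assms(3)]) auto
qed

lemma strategyproof_separation_strict_upper_contour_eq:
  assumes "strategyproof M \<phi>" and "finite M" and "separation_with M R R' C1 C2"
    and "ind_class M R a = C1 \<union> C2"
  shows "sum (\<phi> R') (upper_contour M R a - ind_class M R a)
    = sum (\<phi> R) (upper_contour M R a - ind_class M R a)"
proof -
  obtain "R \<in> pref_orders M" and "R' \<in> pref_orders M" and R': "R' = R - C2 \<times> C1"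
    using assms(3) by (rule separation_withE)
  let ?V = "upper_contour M R a - ind_class M R a"
  show ?thesis
  proof (rule strict_upper_contour_cases[OF \<open>R \<in> pref_orders M\<close> assms(2), of a])
    fix b assume "b \<in> ?V" and V: "upper_contour M R b = ?V"
    then have "b \<in> M" and "upper_contour M R' b = ?V"
      using assms(4) unfolding R' upper_contour_diff_times by (auto simp: upper_contour_def)
    then show ?thesis
      using strategyproof_upper_contour_eq[OF assms(1) \<open>R \<in> pref_orders M\<close> \<open>R' \<in> pref_orders M\<close>] V
      by metis
  qed (metis sum.empty)
qed

lemma strategyproof_separation_shift:
  assumes "strategyproof M \<phi>" and "separation_with M R R' C1 C2"
    and "ind_class M R a = C1 \<union> C2"
  shows "sum (\<phi> R) (upper_contour M R a - C2) \<le> sum (\<phi> R') (upper_contour M R a - C2)"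
proof -
  obtain c where "c \<in> C1" and "R \<in> pref_orders M" and "R' \<in> pref_orders M"
    using assms(2) by (elim separation_withE) auto
  moreover have "c \<in> M"
    using \<open>c \<in> C1\<close> assms(3) unfolding ind_class_def by auto
  ultimately show ?thesis
    using strategyproof_upper_contour_le[OF assms(1) \<open>R' \<in> pref_orders M\<close> \<open>R \<in> pref_orders M\<close>, of c]
      separation_upper_contour[OF assms(2,3), of c] by simp
qed

theorem lemma3:
  fixes M :: "'a set" and \<phi> :: "'a rel \<Rightarrow> 'a \<Rightarrow> real"
  assumes "finite M"
    and "\<forall>R\<in>pref_orders M. lottery M (\<phi> R)"
    and "strategyproof M \<phi>"
  shows "separation_responsive M \<phi>"
  unfolding separation_responsive_def prob_set_def
proof (intro allI impI)
  fix R R' C1 C2 assume sep: "separation_with M R R' C1 C2"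
  then obtain a where "a \<in> M" and a_class: "ind_class M R a = C1 \<union> C2" and "C1 \<inter> C2 = {}"
    by (rule separation_withE)
  define U where "U = upper_contour M R a"
  have "finite U"
    using assms(1) unfolding U_def by (rule finite_upper_contour)
  have "C1 \<subseteq> U - C2" and "C2 \<subseteq> U" and "U - ind_class M R a = U - C2 - C1"
    using a_class \<open>C1 \<inter> C2 = {}\<close> unfolding U_def upper_contour_def ind_class_def by auto
  then have split_U: "sum x U = sum x (U - ind_class M R a) + sum x C1 + sum x C2"
    and split_U_C2: "sum x (U - C2) = sum x (U - ind_class M R a) + sum x C1" for x :: "'a \<Rightarrow> real"
    using \<open>finite U\<close> sum.subset_diff[of C2 U x] sum.subset_diff[of C1 "U - C2" x] by simp_all
  have "sum (\<phi> R') U = sum (\<phi> R) U"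
    and "sum (\<phi> R') (U - ind_class M R a) = sum (\<phi> R) (U - ind_class M R a)"
    and "sum (\<phi> R) (U - C2) \<le> sum (\<phi> R') (U - C2)"
    unfolding U_def
    using strategyproof_separation_upper_contour_eq[OF assms(3) sep \<open>a \<in> M\<close> a_class]
      strategyproof_separation_strict_upper_contour_eq[OF assms(3,1) sep a_class]
      strategyproof_separation_shift[OF assms(3) sep a_class] .
  then show "sum (\<phi> R) C1 \<le> sum (\<phi> R') C1 \<and> sum (\<phi> R') C2 \<le> sum (\<phi> R) C2"
    using split_U[of "\<phi> R"] split_U[of "\<phi> R'"] split_U_C2[of "\<phi> R"] split_U_C2[of "\<phi> R'"]
    by linarith
qed

end
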